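(* Let $\Sigma$ be a system as in the context, $\mathcal G=\mathrm{im}(\mathcal{R}each(A,G))$, $\mathcal Q=\ker(\mathcal{O}bs_n(A,C))$, and let $\mathcal S_1,\dots,\mathcal S_\delta\subseteq\mathbb R^n$ be the generalized real eigenspaces of $A$ (one for each real eigenvalue and one for each pair of complex conjugate eigenvalues). Assume that for every $k$: ($\mathcal S_k\subseteq\mathcal G$ or $\mathcal S_k\cap\mathcal G=\{0\}$) and ($\mathcal S_k\subseteq\mathcal Q$ or $\mathcal S_k\cap\mathcal Q=\{0\}$). Let $\mathcal S_\Sigma$ be the direct sum of all $\mathcal S_k$ with $\mathcal S_k\subseteq\mathcal Q$ and $\mathcal S_k\cap\mathcal G=\{0\}$, and let $R$ be any real matrix with $n$ columns such that $\ker(R)=\mathcal S_\Sigma$. Then $\ker([R\ \ -R])$ is a total relation satisfying conditions $(h_0)$–$(h_5)$ below with $R_1=R_2=R$, and it has maximal dimension among all total relations $\mathcal R=\ker([R_1\ \ -R_2])\subseteq\mathbb R^n\times\mathbb R^n$ ($R_1,R_2$ with $n$ columns and the same number of rows) satisfying: $(h_0)$ $\mathrm{diag}(A,A)\mathcal R\subseteq\mathcal R$; $(h_1)$ $R_1B=R_2B$; $(h_2)$ $R_1G\mu=R_2G\mu$; $(h_3)$ $R_1GG^TR_1^T=R_2GG^TR_2^T$; $(h_4)$ $\mathcal R\subseteq\ker([C\ \ -C])$; $(h_5)$ $\mathcal G\cap\ker(R_i)=\{0\}$ for $i=1,2$.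
   Context: $\Sigma$: $x(t+1)=Ax(t)+Bu(t)+Gw(t)$, $y(t)=Cx(t)+\nu(t)$, $t\in\mathbb N$, $x\in\mathbb R^n$, $u\in\mathbb R^m$, $w\in\mathbb R^l$, $y,\nu\in\mathbb R^p$, where $(w(t))_t$ is i.i.d. $\mathcal N(\mu,I_l)$ and $(\nu(t))_t$ is i.i.d. $\mathcal N(0,\Psi)$. $\mathcal{R}each(A,G)=[G\ AG\ \cdots\ A^{n-1}G]$; $\mathcal{O}bs_n(A,C)$ is the matrix obtained by stacking $C,CA,\dots,CA^{n-1}$ vertically. A relation $\mathcal R\subseteq\mathbb R^n\times\mathbb R^n$ is total if every $x$ is a first component and every $x'$ a second component of some pair in $\mathcal R$. *)

theory Defs
  imports "HOL-Analysis.Analysis"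
begin

text \<open>Matrix power (note: the ring operations on vec types are componentwise,
so we define the matrix power via matrix multiplication).\<close>
primrec mpow :: "real^'n^'n \<Rightarrow> nat \<Rightarrow> real^'n^'n" where
  "mpow A 0 = mat 1"
| "mpow A (Suc k) = A ** mpow A k"

text \<open>Image of the reachability matrix [G AG ... A^(n-1)G].\<close>
definition reach_space :: "real^'n^'n \<Rightarrow> real^'l^'n \<Rightarrow> (real^'n) set" where
  "reach_space A G = {\<Sum>i<CARD('n). (mpow A i ** G) *v u i | u. True}"

definition unobs_space :: "real^'n^'n \<Rightarrow> real^'n^'p \<Rightarrow> (real^'n) set" where
  "unobs_space A C = {x. \<forall>i<CARD('n). (C ** mpow A i) *v x = 0}"

definition mker :: "real^'a^'b \<Rightarrow> (real^'a) set" where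
  "mker M = {x. M *v x = 0}"

definition gen_real_eigenspaces :: "real^'n^'n \<Rightarrow> (real^'n) set set" where
  "gen_real_eigenspaces A =
     {mker (mpow (A - mat c) CARD('n)) | c. det (A - mat c) = 0}
   \<union> {mker (mpow ((A - mat a) ** (A - mat a) + mat (b^2)) CARD('n)) | a b.
        b > 0 \<and> det (\<chi> i j. complex_of_real (A $ i $ j)
                               - (if i = j then Complex a b else 0)) = 0}"

definition S_Sigma :: "real^'n^'n \<Rightarrow> real^'l^'n \<Rightarrow> real^'n^'p \<Rightarrow> (real^'n) set" where
  "S_Sigma A G C = span (\<Union>{S \<in> gen_real_eigenspaces A.
       S \<subseteq> unobs_space A C \<and> S \<inter> reach_space A G = {0}})"

definition rel_ker :: "real^'n^'k \<Rightarrow> real^'n^'k \<Rightarrow> ((real^'n) \<times> (real^'n)) set" where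
  "rel_ker R1 R2 = {(x, y). R1 *v x - R2 *v y = 0}"

definition total_rel :: "('a \<times> 'b) set \<Rightarrow> bool" where
  "total_rel \<R> \<longleftrightarrow> (\<forall>x. \<exists>y. (x, y) \<in> \<R>) \<and> (\<forall>y. \<exists>x. (x, y) \<in> \<R>)"

definition admissible ::
  "real^'n^'n \<Rightarrow> real^'m^'n \<Rightarrow> real^'l^'n \<Rightarrow> real^'n^'p \<Rightarrow> real^'l
    \<Rightarrow> real^'n^'k \<Rightarrow> real^'n^'k \<Rightarrow> bool" where
  "admissible A B G C \<mu> R1 R2 \<longleftrightarrow>
     (\<forall>(x, y) \<in> rel_ker R1 R2. (A *v x, A *v y) \<in> rel_ker R1 R2) \<and>
     R1 ** B = R2 ** B \<and>
     R1 *v (G *v \<mu>) = R2 *v (G *v \<mu>) \<and>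
     R1 ** G ** transpose G ** transpose R1 = R2 ** G ** transpose G ** transpose R2 \<and>
     rel_ker R1 R2 \<subseteq> rel_ker C C \<and>
     reach_space A G \<inter> mker R1 = {0} \<and>
     reach_space A G \<inter> mker R2 = {0}"

end

theory Submission
  imports Defs
    "HOL-Computational_Algebra.Polynomial_Factorial"
    "HOL-Computational_Algebra.Fundamental_Theorem_Algebra"
    "HOL-Computational_Algebra.Field_as_Ring"
begin

text \<open>Every \<open>A\<close>-invariant subspace \<open>V\<close> of \<open>\<real>\<^sup>n\<close> is the sum of its intersections with the
  generalized real eigenspaces of \<open>A\<close>: a vector of \<open>V\<close> is annihilated by some real polynomial,
  which splits into coprime powers of linear and irreducible quadratic factors, and Bezout
  identities distribute the vector over the corresponding kernels. Since distinct eigenspaces are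
  independent, this gives \<open>\<G> \<inter> S_Sigma = {0}\<close>, so \<open>ker R = S_Sigma\<close> satisfies (h0)--(h5).
  Conversely, if \<open>ker([R\<^sub>1 -R\<^sub>2])\<close> is admissible, then \<open>ker R\<^sub>1\<close> is \<open>A\<close>-invariant, lies in \<open>\<Q>\<close> and
  meets \<open>\<G>\<close> trivially; under the splitting hypothesis its eigenspace components can only come
  from eigenspaces inside \<open>\<Q>\<close> meeting \<open>\<G>\<close> trivially, so \<open>ker R\<^sub>1 \<subseteq> S_Sigma\<close>. For a total relation
  \<open>dim ker([R\<^sub>1 -R\<^sub>2]) = n + dim ker R\<^sub>1\<close>, which gives maximality.\<close>

section \<open>Polynomials acting on vectors\<close>

text \<open>Horner evaluation of \<open>p(A) x\<close>. The ring operations on \<open>real^'n^'n\<close> are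
  componentwise, so \<open>poly p A\<close> would not be the matrix polynomial.\<close>
definition poly_act :: "real^'n^'n \<Rightarrow> real poly \<Rightarrow> real^'n \<Rightarrow> real^'n" where
  "poly_act A p = fold_coeffs (\<lambda>a f x. a *\<^sub>R x + A *v f x) p (\<lambda>x. 0)"

lemma poly_act_0 [simp]: "poly_act A 0 x = 0"
  by (simp add: poly_act_def)

lemma poly_act_pCons [simp]: "poly_act A (pCons a p) x = a *\<^sub>R x + A *v poly_act A p x"
  by (cases "p = 0 \<and> a = 0") (auto simp: poly_act_def)

lemma poly_act_zero_right [simp]: "poly_act A p 0 = 0"
  by (induction p) auto

lemma poly_act_add_right: "poly_act A p (x + y) = poly_act A p x + poly_act A p y"
  by (induction p) (auto simp: algebra_simps matrix_vector_right_distrib)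

lemma poly_act_scaleR_right: "poly_act A p (c *\<^sub>R x) = c *\<^sub>R poly_act A p x"
  by (induction p) (auto simp: algebra_simps matrix_vector_mult_scaleR)

lemma linear_poly_act: "linear (poly_act A p)"
  by (rule linearI) (simp_all add: poly_act_add_right poly_act_scaleR_right)

lemma poly_act_add: "poly_act A (p + q) x = poly_act A p x + poly_act A q x"
proof (induction p arbitrary: q)
  case (pCons a p)
  obtain b r where "q = pCons b r" by (cases q)
  then show ?case by (simp add: pCons.IH algebra_simps matrix_vector_right_distrib)
qed simp

lemma poly_act_smult: "poly_act A (smult c p) x = c *\<^sub>R poly_act A p x"
  by (induction p) (auto simp: algebra_simps matrix_vector_mult_scaleR)

lemma poly_act_minus: "poly_act A (- p) x = - poly_act A p x"
  using poly_act_smult[of A "-1" p x] by simp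

lemma poly_act_diff: "poly_act A (p - q) x = poly_act A p x - poly_act A q x"
  using poly_act_add[of A p "- q" x] by (simp add: poly_act_minus)

lemma poly_act_mult: "poly_act A (p * q) x = poly_act A p (poly_act A q x)"
proof (induction p)
  case (pCons a p)
  have "poly_act A (pCons a p * q) x = poly_act A (smult a q + pCons 0 (p * q)) x"
    by simp
  also have "\<dots> = a *\<^sub>R poly_act A q x + A *v poly_act A p (poly_act A q x)"
    by (simp only: poly_act_add poly_act_smult poly_act_pCons pCons.IH) simp
  finally show ?case by simp
qed simp

lemma poly_act_commute: "poly_act A p (poly_act A q x) = poly_act A q (poly_act A p x)"
  by (metis poly_act_mult mult.commute)

lemma poly_act_1 [simp]: "poly_act A 1 x = x"
  by (simp add: one_pCons)

lemma poly_act_power: "poly_act A (p ^ k) x = (poly_act A p ^^ k) x"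
  by (induction k arbitrary: x) (auto simp: poly_act_mult funpow_swap1)

lemma poly_act_monom_X_power: "poly_act A ([:0, 1:] ^ k) x = ((*v) A ^^ k) x"
proof -
  have "poly_act A [:0, 1:] = (*v) A" by auto
  then show ?thesis by (simp add: poly_act_power)
qed

lemma poly_act_in_invariant_subspace:
  assumes "subspace V" "\<And>x. x \<in> V \<Longrightarrow> A *v x \<in> V" "x \<in> V"
  shows "poly_act A p x \<in> V"
  using assms(3) by (induction p arbitrary: x) (auto simp: assms(1,2) subspace_0 subspace_add subspace_scale)

lemma mpow_mult_vec: "mpow M k *v x = ((*v) M ^^ k) x"
  by (induction k arbitrary: x) (auto simp: matrix_vector_mul_assoc[symmetric])

lemma mat_mult_vec: "mat c *v x = c *\<^sub>R (x :: real^'n)"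
  by (simp add: vec_eq_iff matrix_vector_mult_def mat_def if_distrib[of "\<lambda>a. a * _"] sum.delta cong: if_cong)

lemma poly_act_linear_factor: "poly_act A [:-c, 1:] x = (A - mat c) *v x"
  by (simp add: matrix_vector_mult_diff_rdistrib mat_mult_vec)

lemma poly_act_quadratic_factor:
  "poly_act A [:a^2 + b^2, -2*a, 1:] x = ((A - mat a) ** (A - mat a) + mat (b^2)) *v x"
proof -
  \<comment> \<open>\<open>simp\<close> turns \<open>v + v\<close> into the componentwise product \<open>v * 2\<close>\<close>
  have two: "v * 2 = 2 *\<^sub>R v" for v :: "real^'n"
    by (simp add: vec_eq_iff)
  show ?thesis
    by (simp add: matrix_vector_mul_assoc[symmetric] matrix_vector_mult_diff_rdistrib
        matrix_vector_mult_add_rdistrib mat_mult_vec matrix_vector_mult_diff_distrib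
        matrix_vector_mult_scaleR power2_eq_square algebra_simps two)
qed


section \<open>Stabilising chains of subspaces\<close>

lemma subspace_chain_stationary_step:
  fixes U :: "nat \<Rightarrow> (real^'n) set"
  assumes sub: "\<And>j. subspace (U j)" and mono: "\<And>j. U j \<subseteq> U (Suc j)"
  shows "\<exists>k\<le>CARD('n). U (Suc k) \<subseteq> U k"
proof (rule ccontr)
  assume "\<not> ?thesis"
  then have strict: "U k \<subset> U (Suc k)" if "k \<le> CARD('n)" for k
    using mono that by blast
  have "k \<le> dim (U k)" if "k \<le> Suc CARD('n)" for k
    using that
  proof (induction k)
    case (Suc k)
    then have "dim (U k) < dim (U (Suc k))"
      using strict by (intro dim_psubset) (simp_all add: span_eq_iff[THEN iffD2, OF sub])
    then show ?case using Suc by simp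
  qed simp
  then have "Suc CARD('n) \<le> dim (U (Suc CARD('n)))" by simp
  then show False using dim_subset_UNIV_cart[of "U (Suc CARD('n))"] by simp
qed

lemma subspace_chain_stabilises:
  fixes U :: "nat \<Rightarrow> (real^'n) set"
  assumes sub: "\<And>j. subspace (U j)" and mono: "\<And>j. U j \<subseteq> U (Suc j)"
    and stay: "\<And>j. U (Suc j) \<subseteq> U j \<Longrightarrow> U (Suc (Suc j)) \<subseteq> U (Suc j)"
  shows "U j \<subseteq> U CARD('n)"
proof -
  obtain k where k: "k \<le> CARD('n)" "U (Suc k) \<subseteq> U k"
    using subspace_chain_stationary_step[where U = U, OF sub mono] by blast
  have "U (Suc (k + i)) \<subseteq> U (k + i)" for i
    by (induction i) (use k stay in auto)
  then have const: "U (k + i) \<subseteq> U k" for i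
    by (induction i) auto
  have le: "j \<le> j' \<Longrightarrow> U j \<subseteq> U j'" for j j'
    using lift_Suc_mono_le[of U, OF mono] by blast
  show ?thesis
  proof (cases "j \<le> CARD('n)")
    case False
    then have "U j \<subseteq> U k" using const[of "j - k"] k(1) by simp
    then show ?thesis using le[OF k(1)] by blast
  qed (use le in blast)
qed

lemma linear_funpow:
  fixes f :: "'a::real_vector \<Rightarrow> 'a"
  shows "linear f \<Longrightarrow> linear (f ^^ j)"
proof (induction j)
  case 0
  show ?case using linear_id by (simp add: id_def)
next
  case (Suc j)
  then show ?case using linear_compose[of "f ^^ j" f] by (simp add: o_def)
qed

lemma kernel_funpow_stabilises:
  fixes f :: "real^'n \<Rightarrow> real^'n"
  assumes "linear f" and "(f ^^ m) x = 0"
  shows "(f ^^ CARD('n)) x = 0"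
proof -
  let ?U = "\<lambda>j. {x. (f ^^ j) x = 0}"
  have "?U m \<subseteq> ?U CARD('n)"
  proof (rule subspace_chain_stabilises)
    show "subspace (?U j)" for j
      using linear_funpow[OF assms(1)] by (rule linear_subspace_kernel)
    show "?U j \<subseteq> ?U (Suc j)" for j
      using linear_0[OF assms(1)] by auto
    show "?U (Suc (Suc j)) \<subseteq> ?U (Suc j)" if "?U (Suc j) \<subseteq> ?U j" for j
      using that by (auto simp: funpow_Suc_right simp del: funpow.simps)
  qed
  then show ?thesis using assms(2) by blast
qed

lemma funpow_in_Krylov_span:
  fixes f :: "real^'n \<Rightarrow> real^'n"
  assumes "linear f"
  shows "(f ^^ j) g \<in> span {(f ^^ i) g | i. i < CARD('n)}"
proof -
  let ?U = "\<lambda>j. span {(f ^^ i) g | i. i < j}"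
  have image: "f ` ?U j \<subseteq> ?U (Suc j)" for j
  proof -
    have "f ` ?U j = span (f ` {(f ^^ i) g | i. i < j})"
      by (rule linear_span_image[OF assms, symmetric])
    also have "\<dots> \<subseteq> ?U (Suc j)"
    proof (rule span_mono, safe)
      show "\<exists>i'. f ((f ^^ i) g) = (f ^^ i') g \<and> i' < Suc j" if "i < j" for i
        using that by (intro exI[of _ "Suc i"]) auto
    qed
    finally show ?thesis .
  qed
  have "?U (Suc j) \<subseteq> ?U CARD('n)"
  proof (rule subspace_chain_stabilises)
    show "?U j \<subseteq> ?U (Suc j)" for j
      by (rule span_mono) auto
    show "?U (Suc (Suc j)) \<subseteq> ?U (Suc j)" if "?U (Suc j) \<subseteq> ?U j" for j
    proof (rule span_minimal)
      have "(f ^^ j) g \<in> ?U j"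
        using that by (blast intro: span_base)
      then have "(f ^^ Suc j) g \<in> ?U (Suc j)"
        using image by auto
      then show "{(f ^^ i) g | i. i < Suc (Suc j)} \<subseteq> ?U (Suc j)"
        by (auto simp: less_Suc_eq intro: span_base)
    qed simp
  qed simp
  moreover have "(f ^^ j) g \<in> ?U (Suc j)"
    by (intro span_base) auto
  ultimately show ?thesis by blast
qed

lemma poly_act_annihilator_exists:
  fixes A :: "real^'n^'n"
  shows "\<exists>p. p \<noteq> 0 \<and> poly_act A p x = 0"
proof -
  let ?n = "CARD('n)"
  let ?W = "{poly_act A q x | q. degree q < ?n}"
  have "subspace ?W"
    unfolding subspace_def
  proof safe
    show "\<exists>q. 0 = poly_act A q x \<and> degree q < ?n"
      by (rule exI[of _ 0]) simp
    show "\<exists>q. poly_act A q1 x + poly_act A q2 x = poly_act A q x \<and> degree q < ?n"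
      if "degree q1 < ?n" "degree q2 < ?n" for q1 q2
      using that by (intro exI[of _ "q1 + q2"])
        (auto simp: poly_act_add intro: le_less_trans[OF degree_add_le_max])
    show "\<exists>q'. c *\<^sub>R poly_act A q x = poly_act A q' x \<and> degree q' < ?n"
      if "degree q < ?n" for c q
      using that by (intro exI[of _ "smult c q"])
        (auto simp: poly_act_smult intro: le_less_trans[OF degree_smult_le])
  qed
  moreover have "{((*v) A ^^ i) x | i. i < ?n} \<subseteq> ?W"
  proof safe
    show "\<exists>q. ((*v) A ^^ i) x = poly_act A q x \<and> degree q < ?n" if "i < ?n" for i
      using that by (intro exI[of _ "[:0, 1:] ^ i"]) (simp add: poly_act_monom_X_power degree_power_eq)
  qed
  ultimately have "span {((*v) A ^^ i) x | i. i < ?n} \<subseteq> ?W"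
    by (rule span_minimal[rotated])
  moreover have "((*v) A ^^ ?n) x \<in> span {((*v) A ^^ i) x | i. i < ?n}"
    by (rule funpow_in_Krylov_span[OF matrix_vector_mul_linear])
  ultimately obtain q where q: "((*v) A ^^ ?n) x = poly_act A q x" "degree q < ?n"
    by blast
  have "coeff ([:0, 1:] ^ ?n - q) ?n = 1"
    using q(2) by (simp add: coeff_eq_0 coeff_linear_power[of 0, simplified])
  then have "[:0, 1:] ^ ?n - q \<noteq> 0" by auto
  moreover have "poly_act A ([:0, 1:] ^ ?n - q) x = 0"
    using q(1) by (simp add: poly_act_diff poly_act_monom_X_power)
  ultimately show ?thesis by blast
qed


section \<open>Real polynomials through their complex roots\<close>

definition cpoly :: "real poly \<Rightarrow> complex \<Rightarrow> complex" where
  "cpoly p = poly (map_poly complex_of_real p)"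

lemma cpoly_0 [simp]: "cpoly 0 z = 0"
  by (simp add: cpoly_def)

lemma cpoly_pCons [simp]: "cpoly (pCons a p) z = of_real a + z * cpoly p z"
  by (simp add: cpoly_def map_poly_pCons)

lemma cpoly_add: "cpoly (p + q) z = cpoly p z + cpoly q z"
proof (induction p arbitrary: q)
  case (pCons a p)
  obtain b r where "q = pCons b r" by (cases q)
  then show ?case by (simp add: pCons.IH algebra_simps)
qed simp

lemma cpoly_smult: "cpoly (smult c p) z = of_real c * cpoly p z"
  by (induction p) (auto simp: algebra_simps)

lemma cpoly_mult: "cpoly (p * q) z = cpoly p z * cpoly q z"
proof (induction p)
  case (pCons a p)
  have "cpoly (pCons a p * q) z = cpoly (smult a q + pCons 0 (p * q)) z"
    by simp
  also have "\<dots> = of_real a * cpoly q z + z * (cpoly p z * cpoly q z)"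
    by (simp only: cpoly_add cpoly_smult cpoly_pCons pCons.IH) simp
  finally show ?case by (simp add: algebra_simps)
qed simp

lemma cpoly_of_real: "cpoly p (of_real c) = of_real (poly p c)"
  by (induction p) auto

lemma cpoly_root_dvd: "p dvd q \<Longrightarrow> cpoly p z = 0 \<Longrightarrow> cpoly q z = 0"
  by (auto simp: cpoly_mult elim!: dvdE)

lemma cpoly_has_root:
  assumes "degree p \<noteq> 0"
  obtains z where "cpoly p z = 0"
proof -
  have "degree (map_poly complex_of_real p) > 0"
    using assms by (simp add: degree_map_poly)
  then show ?thesis
    using alg_closed_imp_poly_has_root that unfolding cpoly_def by blast
qed

lemma coprime_if_no_common_cpoly_root:
  fixes p q :: "real poly"
  assumes "p \<noteq> 0" and "\<And>z. cpoly p z = 0 \<Longrightarrow> cpoly q z \<noteq> 0"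
  shows "coprime p q"
proof (cases "degree (gcd p q) = 0")
  case True
  then show ?thesis
    using assms(1) is_unit_iff_degree is_unit_gcd by (metis gcd_eq_0_iff)
next
  case False
  then obtain z where "cpoly (gcd p q) z = 0"
    by (rule cpoly_has_root)
  then show ?thesis
    using assms(2) cpoly_root_dvd[OF gcd_dvd1] cpoly_root_dvd[OF gcd_dvd2] by blast
qed

definition quad :: "real \<Rightarrow> real \<Rightarrow> real poly" where
  "quad a b = [:a^2 + b^2, -2*a, 1:]"

lemma cpoly_quad_eq_0_iff: "cpoly (quad a b) z = 0 \<longleftrightarrow> z = Complex a b \<or> z = Complex a (-b)"
proof -
  have "cpoly (quad a b) z = (z - Complex a b) * (z - Complex a (-b))"
    by (simp add: quad_def complex_eq_iff algebra_simps power2_eq_square)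
  then show ?thesis by simp
qed

definition elementary_factor :: "real poly \<Rightarrow> bool" where
  "elementary_factor F \<longleftrightarrow> (\<exists>c. F = [:-c, 1:]) \<or> (\<exists>a b. F = quad a b \<and> b > 0)"

lemma elementary_factor_nonzero: "elementary_factor F \<Longrightarrow> F \<noteq> 0"
  by (auto simp: elementary_factor_def quad_def)

lemma elementary_factor_degree_pos: "elementary_factor F \<Longrightarrow> degree F > 0"
  by (auto simp: elementary_factor_def quad_def)

lemma elementary_factor_normalize: "elementary_factor F \<Longrightarrow> normalize F = F"
  by (auto simp: elementary_factor_def quad_def normalize_poly_eq_map_poly)

lemma linear_poly_of_degree_le_1: "degree (s :: real poly) \<le> 1 \<Longrightarrow> s = [:coeff s 0, coeff s 1:]"
  by (rule poly_eqI) (auto simp: coeff_pCons coeff_eq_0 split: nat.split)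

lemma quad_dvd_iff_cpoly_root:
  assumes "b \<noteq> 0" and "cpoly (quad a b) w = 0"
  shows "quad a b dvd r \<longleftrightarrow> cpoly r w = 0"
proof
  assume "cpoly r w = 0"
  let ?s = "r mod quad a b"
  have "cpoly r w = cpoly (quad a b) w * cpoly (r div quad a b) w + cpoly ?s w"
    by (metis cpoly_add cpoly_mult div_mult_mod_eq mult.commute)
  then have root: "cpoly ?s w = 0"
    using \<open>cpoly r w = 0\<close> assms(2) by simp
  have "degree ?s \<le> 1"
  proof (cases "?s = 0")
    case False
    have "quad a b \<noteq> 0" by (simp add: quad_def)
    then show ?thesis
      using degree_mod_less[of "quad a b" r] False by (simp add: quad_def)
  qed simp
  then have s: "?s = [:coeff ?s 0, coeff ?s 1:]"
    by (rule linear_poly_of_degree_le_1)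
  have "Im w \<noteq> 0"
    using assms by (auto simp: cpoly_quad_eq_0_iff)
  moreover have eq: "of_real (coeff ?s 0) + w * of_real (coeff ?s 1) = 0"
    using root arg_cong[OF s, of "\<lambda>p. cpoly p w"] by simp
  ultimately have "coeff ?s 1 = 0"
    by (simp add: complex_eq_iff)
  moreover from this have "coeff ?s 0 = 0"
    using eq by simp
  ultimately have "?s = 0"
    using s by (metis pCons_0_0)
  then show "quad a b dvd r"
    by (simp add: mod_eq_0_iff_dvd)
qed (use assms cpoly_root_dvd in blast)

lemma elementary_factor_dvd_iff_cpoly_root:
  assumes "elementary_factor F" and "cpoly F z = 0"
  shows "F dvd r \<longleftrightarrow> cpoly r z = 0"
  using assms unfolding elementary_factor_def
proof (elim disjE exE conjE)
  fix c assume F: "F = [:-c, 1:]"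
  then have "z = of_real c"
    using assms(2) by simp
  then show ?thesis
    by (simp add: F cpoly_of_real poly_eq_0_iff_dvd)
next
  fix a b :: real assume "F = quad a b" "b > 0"
  then show ?thesis
    using quad_dvd_iff_cpoly_root[of b a z r] assms(2) by simp
qed

lemma elementary_factor_coprime_or_dvd:
  assumes "elementary_factor F"
  shows "coprime F r \<or> F dvd r"
proof -
  have "coprime F r" if "\<not> F dvd r"
    using that assms elementary_factor_dvd_iff_cpoly_root
    by (intro coprime_if_no_common_cpoly_root elementary_factor_nonzero) blast+
  then show ?thesis by blast
qed

lemma elementary_factors_coprime:
  assumes "elementary_factor F" "elementary_factor F'" "F \<noteq> F'"
  shows "coprime F F'"
  using elementary_factor_coprime_or_dvd[OF assms(1), of F']
    elementary_factor_coprime_or_dvd[OF assms(2), of F]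
    associated_eqI[of F F'] elementary_factor_normalize assms
  by (auto simp: coprime_commute)

lemma exists_elementary_factor:
  assumes "degree p \<noteq> 0"
  obtains F where "elementary_factor F" "F dvd p"
proof -
  obtain z where z: "cpoly p z = 0"
    using assms by (rule cpoly_has_root)
  define F where "F = (if Im z = 0 then [:- Re z, 1:] else quad (Re z) \<bar>Im z\<bar>)"
  have "elementary_factor F"
    unfolding elementary_factor_def F_def
    by (cases "Im z = 0") (simp, intro disjI2 exI[of _ "Re z"] exI[of _ "\<bar>Im z\<bar>"], simp)
  moreover have "cpoly F z = 0"
    by (simp add: F_def cpoly_quad_eq_0_iff) (simp add: complex_eq_iff abs_if)
  ultimately show ?thesis
    using that z elementary_factor_dvd_iff_cpoly_root by blast
qed


section \<open>Generalized real eigenspaces\<close>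

definition complex_shift :: "real^'n^'n \<Rightarrow> complex \<Rightarrow> complex^'n^'n" where
  "complex_shift A z = (\<chi> i j. complex_of_real (A $ i $ j) - (if i = j then z else 0))"

definition eigen_factor :: "real^'n^'n \<Rightarrow> real poly \<Rightarrow> bool" where
  "eigen_factor A F \<longleftrightarrow>
     (\<exists>c. F = [:-c, 1:] \<and> det (A - mat c) = 0) \<or>
     (\<exists>a b. F = quad a b \<and> b > 0 \<and> det (complex_shift A (Complex a b)) = 0)"

definition gen_eigenspace :: "real^'n^'n \<Rightarrow> real poly \<Rightarrow> (real^'n) set" where
  "gen_eigenspace A F = {x. poly_act A (F ^ CARD('n)) x = 0}"

lemma gen_real_eigenspaces_eq:
  fixes A :: "real^'n^'n"
  shows "gen_real_eigenspaces A = {gen_eigenspace A F | F. eigen_factor A F}"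
proof -
  have ker: "mker (mpow M CARD('n)) = gen_eigenspace A F"
    if "(*v) M = poly_act A F" for M :: "real^'n^'n" and F
    by (simp add: mker_def gen_eigenspace_def mpow_mult_vec poly_act_power that)
  have linear: "mker (mpow (A - mat c) CARD('n)) = gen_eigenspace A [:-c, 1:]" for c
    by (rule ker, rule ext) (simp only: poly_act_linear_factor)
  have quadratic:
    "mker (mpow ((A - mat a) ** (A - mat a) + mat (b^2)) CARD('n)) = gen_eigenspace A (quad a b)"
    for a b
    by (rule ker, rule ext) (simp only: poly_act_quadratic_factor quad_def)
  show ?thesis
    unfolding gen_real_eigenspaces_def eigen_factor_def complex_shift_def linear quadratic
    by blast
qed

lemma eigen_factor_imp_elementary: "eigen_factor A F \<Longrightarrow> elementary_factor F"
  by (auto simp: eigen_factor_def elementary_factor_def)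

lemma complex_shift_mult_vec:
  "complex_shift A z *v (\<chi> i. Complex (u $ i) (v $ i)) =
     (\<chi> i. Complex ((A *v u) $ i) ((A *v v) $ i) - z * Complex (u $ i) (v $ i))"
proof -
  have "(\<Sum>j\<in>UNIV. (complex_of_real (A $ i $ j) - (if i = j then z else 0)) * Complex (u $ j) (v $ j))
      = (\<Sum>j\<in>UNIV. complex_of_real (A $ i $ j) * Complex (u $ j) (v $ j)) - z * Complex (u $ i) (v $ i)"
    for i
    by (simp add: left_diff_distrib sum_subtractf if_distrib[of "\<lambda>a. a * _"] cong: if_cong)
  then show ?thesis
    by (simp add: vec_eq_iff complex_shift_def matrix_vector_mult_def complex_eq_iff Re_sum Im_sum)
qed

lemma linear_factor_kernel_trivial:
  fixes A :: "real^'n^'n"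
  assumes "det (A - mat c) \<noteq> 0" and "poly_act A [:-c, 1:] x = 0"
  shows "x = 0"
proof -
  have "inj ((*v) (A - mat c))"
    using assms(1) by (simp add: inj_matrix_vector_mult invertible_det_nz)
  then show ?thesis
    using assms(2) by (simp only: poly_act_linear_factor vec.inj_iff_eq_0)
qed

lemma complex_shift_eigenvector:
  assumes "A *v u = a *\<^sub>R u - b *\<^sub>R v" and "A *v v = b *\<^sub>R u + a *\<^sub>R v"
  shows "complex_shift A (Complex a b) *v (\<chi> i. Complex (u $ i) (v $ i)) = 0"
  unfolding complex_shift_mult_vec assms by (simp add: vec_eq_iff complex_eq_iff)

lemma quadratic_factor_kernel_trivial:
  fixes A :: "real^'n^'n"
  assumes "det (complex_shift A (Complex a b)) \<noteq> 0" and "b \<noteq> 0"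
    and "poly_act A (quad a b) x = 0"
  shows "x = 0"
proof -
  define u where "u = A *v x - a *\<^sub>R x"
  define v where "v = b *\<^sub>R x"
  have "A *v (A *v x) + (a^2 + b^2) *\<^sub>R x = (2 * a) *\<^sub>R (A *v x)"
    using assms(3) by (simp add: quad_def matrix_vector_mult_scaleR algebra_simps)
  then have AAx: "A *v (A *v x) = (2 * a) *\<^sub>R (A *v x) - (a^2 + b^2) *\<^sub>R x"
    by (simp add: eq_diff_eq)
  have "A *v u = A *v (A *v x) - a *\<^sub>R (A *v x)"
    by (simp add: u_def matrix_vector_mult_diff_distrib matrix_vector_mult_scaleR)
  also have "\<dots> = (2 * a) *\<^sub>R (A *v x) - (a^2 + b^2) *\<^sub>R x - a *\<^sub>R (A *v x)"
    by (simp only: AAx)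
  also have "\<dots> = a *\<^sub>R (A *v x) - (a^2 + b^2) *\<^sub>R x"
  proof -
    have "(2 * a) *\<^sub>R (A *v x) = a *\<^sub>R (A *v x) + a *\<^sub>R (A *v x)"
      by (metis mult_2 scaleR_left_distrib)
    then show ?thesis by simp
  qed
  also have "\<dots> = a *\<^sub>R u - b *\<^sub>R v"
    unfolding u_def v_def by (simp add: scaleR_diff_right scaleR_add_left power2_eq_square)
  finally have Au: "A *v u = a *\<^sub>R u - b *\<^sub>R v" .
  have Av: "A *v v = b *\<^sub>R u + a *\<^sub>R v"
    by (simp add: u_def v_def matrix_vector_mult_scaleR algebra_simps)
  have "complex_shift A (Complex a b) *v (\<chi> i. Complex (u $ i) (v $ i)) = 0"
    using Au Av by (rule complex_shift_eigenvector)
  moreover have "inj ((*v) (complex_shift A (Complex a b)))"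
    using assms(1) by (simp add: inj_matrix_vector_mult invertible_det_nz)
  ultimately have "(\<chi> i. Complex (u $ i) (v $ i)) = 0"
    by (metis injD matrix_vector_mult_0_right)
  then have "v = 0"
    by (simp add: vec_eq_iff complex_eq_iff)
  then show ?thesis
    using assms(2) by (simp add: v_def)
qed

lemma non_eigen_factor_kernel_trivial:
  fixes A :: "real^'n^'n"
  assumes "elementary_factor F" "\<not> eigen_factor A F" "poly_act A F x = 0"
  shows "x = 0"
  using assms linear_factor_kernel_trivial quadratic_factor_kernel_trivial
  unfolding elementary_factor_def eigen_factor_def by fastforce

lemma non_eigen_factor_power_kernel_trivial:
  fixes A :: "real^'n^'n"
  assumes "elementary_factor F" "\<not> eigen_factor A F" "poly_act A (F ^ m) x = 0"
  shows "x = 0"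
  using assms(3)
proof (induction m arbitrary: x)
  case (Suc m)
  then have "poly_act A (F ^ m) (poly_act A F x) = 0"
    by (simp only: power_Suc2 poly_act_mult)
  then have "poly_act A F x = 0"
    using Suc.IH by blast
  then show ?case
    using non_eigen_factor_kernel_trivial[OF assms(1,2)] by blast
qed simp

lemma power_kernel_subset_gen_eigenspace:
  fixes A :: "real^'n^'n"
  assumes "poly_act A (F ^ m) x = 0"
  shows "x \<in> gen_eigenspace A F"
  using kernel_funpow_stabilises[OF linear_poly_act] assms
  by (simp add: gen_eigenspace_def poly_act_power)

lemma gen_eigenspace_poly_act_closed: "x \<in> gen_eigenspace A F \<Longrightarrow> poly_act A p x \<in> gen_eigenspace A F"
  unfolding gen_eigenspace_def by (simp add: poly_act_commute[of A _ p])

lemma gen_eigenspace_mult_closed: "x \<in> gen_eigenspace A F \<Longrightarrow> A *v x \<in> gen_eigenspace A F"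
  using gen_eigenspace_poly_act_closed[of x A F "[:0, 1:]"] by simp

section \<open>Invariant subspaces as sums of eigenspace components\<close>

lemma coprime_poly_act_kernel_split:
  fixes A :: "real^'n^'n"
  assumes "coprime p q" and "poly_act A (p * q) x = 0"
    and V: "subspace V" "\<And>y. y \<in> V \<Longrightarrow> A *v y \<in> V" and "x \<in> V"
  obtains y z where "x = y + z" "y \<in> V" "z \<in> V" "poly_act A p y = 0" "poly_act A q z = 0"
proof -
  obtain s t where st: "s * p + t * q = 1"
    using bezout_coefficients_fst_snd[of p q] assms(1) by auto
  let ?y = "poly_act A (t * q) x" and ?z = "poly_act A (s * p) x"
  have "poly_act A p ?y = poly_act A t (poly_act A (p * q) x)"
    "poly_act A q ?z = poly_act A s (poly_act A (p * q) x)"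
    by (simp_all add: mult_ac flip: poly_act_mult)
  then have "poly_act A p ?y = 0" "poly_act A q ?z = 0"
    using assms(2) by simp_all
  moreover have "x = ?y + ?z"
    using poly_act_add[of A "s * p" "t * q" x] st by (simp add: add.commute)
  moreover have "?y \<in> V" "?z \<in> V"
    using poly_act_in_invariant_subspace[OF V \<open>x \<in> V\<close>] by blast+
  ultimately show ?thesis
    using that by blast
qed

lemma coprime_poly_act_kernels_disjoint:
  assumes "coprime p q" and "poly_act A p x = 0" and "poly_act A q x = 0"
  shows "x = 0"
proof -
  obtain s t where st: "s * p + t * q = 1"
    using bezout_coefficients_fst_snd[of p q] assms(1) by auto
  have "x = poly_act A (s * p + t * q) x"
    by (simp add: st)
  also have "\<dots> = poly_act A s (poly_act A p x) + poly_act A t (poly_act A q x)"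
    by (simp add: poly_act_add poly_act_mult)
  also have "\<dots> = 0"
    using assms(2,3) by simp
  finally show ?thesis .
qed

lemma annihilated_in_span_gen_eigenspaces:
  fixes A :: "real^'n^'n"
  assumes V: "subspace V" "\<And>y. y \<in> V \<Longrightarrow> A *v y \<in> V"
  shows "p \<noteq> 0 \<Longrightarrow> x \<in> V \<Longrightarrow> poly_act A p x = 0 \<Longrightarrow>
    x \<in> span (\<Union>S\<in>gen_real_eigenspaces A. V \<inter> S)"
proof (induction "degree p" arbitrary: p x rule: less_induct)
  case less
  let ?T = "span (\<Union>S\<in>gen_real_eigenspaces A. V \<inter> S)"
  show ?case
  proof (cases "degree p = 0")
    case True
    then obtain c where "p = [:c:]" "c \<noteq> 0"
      using less.prems(1) by (metis degree_eq_zeroE pCons_0_0)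
    then have "x = 0"
      using less.prems(3) by simp
    then show ?thesis by (simp add: span_zero)
  next
    case False
    then obtain F where F: "elementary_factor F" "F dvd p"
      by (rule exists_elementary_factor)
    have "\<not> is_unit F"
      using F(1) by (simp add: is_unit_iff_degree elementary_factor_nonzero elementary_factor_degree_pos)
    then obtain r where r: "p = F ^ multiplicity F p * r" "\<not> F dvd r"
      using multiplicity_decompose'[OF less.prems(1)] by blast
    have "multiplicity F p > 0"
      using multiplicity_gt_zero_iff[OF less.prems(1) \<open>\<not> is_unit F\<close>] F(2) by blast
    moreover have "r \<noteq> 0"
      using r(1) less.prems(1) by auto
    ultimately have "degree r < degree p"
      using F(1) elementary_factor_nonzero elementary_factor_degree_pos
      by (subst r(1)) (simp add: degree_mult_eq degree_power_eq)
    have "coprime (F ^ multiplicity F p) r"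
      using elementary_factor_coprime_or_dvd[OF F(1), of r] r(2) by simp
    then obtain y z where yz: "x = y + z" "y \<in> V" "z \<in> V"
      "poly_act A (F ^ multiplicity F p) y = 0" "poly_act A r z = 0"
      using coprime_poly_act_kernel_split[OF _ _ V less.prems(2)] less.prems(3) r(1) by metis
    have "z \<in> ?T"
      using less.hyps[OF \<open>degree r < degree p\<close> \<open>r \<noteq> 0\<close> yz(3,5)] .
    moreover have "y \<in> ?T"
    proof (cases "eigen_factor A F")
      case True
      then have "gen_eigenspace A F \<in> gen_real_eigenspaces A"
        by (auto simp: gen_real_eigenspaces_eq)
      then show ?thesis
        using yz(2) power_kernel_subset_gen_eigenspace[OF yz(4)] by (intro span_base) blast
    next
      case False
      then show ?thesis
        using non_eigen_factor_power_kernel_trivial[OF F(1) False yz(4)] by (simp add: span_zero)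
    qed
    ultimately show ?thesis
      using yz(1) by (simp add: span_add)
  qed
qed

lemma invariant_subspace_in_span_gen_eigenspaces:
  fixes A :: "real^'n^'n"
  assumes "subspace V" "\<And>y. y \<in> V \<Longrightarrow> A *v y \<in> V"
  shows "V \<subseteq> span (\<Union>S\<in>gen_real_eigenspaces A. V \<inter> S)"
  using annihilated_in_span_gen_eigenspaces[OF assms] poly_act_annihilator_exists by blast


text \<open>A vector in the span of the other generalized eigenspaces is annihilated by a product of
  powers of the other eigen-factors, which is coprime to \<open>F\<^sup>n\<close>.\<close>
lemma gen_eigenspace_inter_span_others:
  fixes A :: "real^'n^'n"
  assumes F: "eigen_factor A F" and z: "z \<in> gen_eigenspace A F" and span: "z \<in> span (\<Union>\<E>)"
    and \<E>: "\<E> \<subseteq> gen_real_eigenspaces A" "gen_eigenspace A F \<notin> \<E>"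
  shows "z = 0"
proof -
  let ?n = "CARD('n)"
  have "\<exists>h. coprime (F ^ ?n) h \<and> poly_act A h z = 0"
    using span
  proof (induction rule: span_induct_alt)
    case base
    show ?case by (rule exI[of _ 1]) simp
  next
    case (step c x y)
    then obtain h where h: "coprime (F ^ ?n) h" "poly_act A h y = 0"
      by blast
    from step.hyps(1) \<E>(1) obtain F' where F': "eigen_factor A F'" "x \<in> gen_eigenspace A F'"
      "gen_eigenspace A F' \<in> \<E>"
      by (auto simp: gen_real_eigenspaces_eq)
    then have "F' \<noteq> F"
      using \<E>(2) by blast
    then have "coprime F F'"
      using elementary_factors_coprime eigen_factor_imp_elementary F F'(1) by metis
    then have "coprime (F ^ ?n) (F' ^ ?n * h)"
      using h(1) by simp
    moreover have "poly_act A (F' ^ ?n * h) (c *\<^sub>R x + y) = 0"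
      using F'(2) h(2)
      by (simp add: gen_eigenspace_def poly_act_add_right poly_act_scaleR_right poly_act_mult
          poly_act_commute[of A "F' ^ ?n" h])
    ultimately show ?case by blast
  qed
  then show ?thesis
    using z coprime_poly_act_kernels_disjoint unfolding gen_eigenspace_def by blast
qed


section \<open>Reachable and unobservable subspaces\<close>

lemma reach_space_def':
  "x \<in> reach_space A G \<longleftrightarrow> (\<exists>u. x = (\<Sum>i<CARD('n). (mpow A i ** G) *v u i))"
  for A :: "real^'n^'n"
  by (auto simp: reach_space_def)

lemma subspace_reach_space:
  fixes A :: "real^'n^'n"
  shows "subspace (reach_space A G)"
proof -
  have "0 \<in> reach_space A G"
    unfolding reach_space_def mem_Collect_eq by (rule exI[of _ "\<lambda>i. 0"]) simp
  moreover have "x + y \<in> reach_space A G"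
    if x: "x \<in> reach_space A G" and y: "y \<in> reach_space A G" for x y
  proof -
    obtain u v where u: "x = (\<Sum>i<CARD('n). (mpow A i ** G) *v u i)"
      and v: "y = (\<Sum>i<CARD('n). (mpow A i ** G) *v v i)"
      using x y unfolding reach_space_def by blast
    show ?thesis
      unfolding reach_space_def mem_Collect_eq u v
      by (rule exI[of _ "\<lambda>i. u i + v i"]) (simp add: matrix_vector_right_distrib sum.distrib)
  qed
  moreover have "c *\<^sub>R x \<in> reach_space A G" if x: "x \<in> reach_space A G" for c x
  proof -
    obtain u where u: "x = (\<Sum>i<CARD('n). (mpow A i ** G) *v u i)"
      using x unfolding reach_space_def by blast
    show ?thesis
      unfolding reach_space_def mem_Collect_eq u
      by (rule exI[of _ "\<lambda>i. c *\<^sub>R u i"]) (simp add: matrix_vector_mult_scaleR scaleR_sum_right)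
  qed
  ultimately show ?thesis
    unfolding subspace_def by blast
qed

lemma Krylov_vector_in_reach_space:
  fixes A :: "real^'n^'n"
  assumes "i < CARD('n)"
  shows "((*v) A ^^ i) (G *v v) \<in> reach_space A G"
proof -
  have "(\<Sum>j<CARD('n). (mpow A j ** G) *v (if j = i then v else 0)) =
        (\<Sum>j<CARD('n). if j = i then (mpow A j ** G) *v v else 0)"
    by (rule sum.cong) auto
  also have "\<dots> = (mpow A i ** G) *v v"
    using assms by simp
  finally have "(mpow A i ** G) *v v \<in> reach_space A G"
    unfolding reach_space_def mem_Collect_eq by (intro exI[of _ "\<lambda>j. if j = i then v else 0"]) simp
  then show ?thesis
    by (simp add: matrix_vector_mul_assoc[symmetric] mpow_mult_vec)
qed

lemma reach_space_invariant:
  fixes A :: "real^'n^'n"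
  assumes "x \<in> reach_space A G"
  shows "A *v x \<in> reach_space A G"
proof -
  obtain u where u: "x = (\<Sum>i<CARD('n). ((*v) A ^^ i) (G *v u i))"
    using assms unfolding reach_space_def' matrix_vector_mul_assoc[symmetric] mpow_mult_vec by blast
  have "A *v ((*v) A ^^ i) (G *v v) \<in> reach_space A G" for i v
  proof -
    have "span {((*v) A ^^ k) (G *v v) | k. k < CARD('n)} \<subseteq> reach_space A G"
      by (rule span_minimal[OF _ subspace_reach_space]) (auto intro: Krylov_vector_in_reach_space)
    moreover have "((*v) A ^^ Suc i) (G *v v) \<in> span {((*v) A ^^ k) (G *v v) | k. k < CARD('n)}"
      by (rule funpow_in_Krylov_span[OF matrix_vector_mul_linear])
    ultimately show ?thesis by auto
  qed
  then show ?thesis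
    unfolding u linear_sum[OF matrix_vector_mul_linear]
    by (intro subspace_sum[OF subspace_reach_space]) blast
qed

lemma subspace_unobs_space: "subspace (unobs_space A C)"
  unfolding subspace_def unobs_space_def
  by (auto simp: matrix_vector_right_distrib matrix_vector_mult_scaleR)

lemma unobs_space_iff:
  fixes A :: "real^'n^'n"
  shows "x \<in> unobs_space A C \<longleftrightarrow> (\<forall>i<CARD('n). C *v ((*v) A ^^ i) x = 0)"
  by (simp add: unobs_space_def matrix_vector_mul_assoc[symmetric] mpow_mult_vec)

lemma unobs_space_subset_mker: "unobs_space A C \<subseteq> mker C"
  for A :: "real^'n^'n"
  by (auto simp: unobs_space_def mker_def dest: spec[of _ 0])


section \<open>Total kernel relations\<close>

lemma subspace_mker: "subspace (mker M)"
  unfolding mker_def by (rule linear_subspace_kernel[OF matrix_vector_mul_linear])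

lemma subspace_rel_ker: "subspace (rel_ker R1 R2)" for R1 R2 :: "real^'n^'k"
  unfolding subspace_def rel_ker_def
  by (auto simp: matrix_vector_right_distrib matrix_vector_mult_scaleR algebra_simps zero_prod_def)

lemma rel_ker_same_iff: "(x, y) \<in> rel_ker R R \<longleftrightarrow> x - y \<in> mker R"
  by (simp add: rel_ker_def mker_def matrix_vector_mult_diff_distrib)

lemma total_rel_ker_same: "total_rel (rel_ker R R)"
  by (auto simp: total_rel_def rel_ker_def)

text \<open>A total relation \<open>\<R>\<close> together with \<open>\<real>\<^sup>n \<times> {0}\<close> spans \<open>\<real>\<^sup>n \<times> \<real>\<^sup>n\<close>, and the two meet in
  \<open>ker R\<^sub>1 \<times> {0}\<close>; the dimension formula for sums of subspaces does the rest.\<close>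
lemma dim_total_rel_ker:
  fixes R1 R2 :: "real^'n^'k"
  assumes "total_rel (rel_ker R1 R2)"
  shows "dim (rel_ker R1 R2) = CARD('n) + dim (mker R1)"
proof -
  let ?W = "rel_ker R1 R2"
  let ?T = "(UNIV :: (real^'n) set) \<times> {0 :: real^'n}"
  have sum: "{x + y |x y. x \<in> ?W \<and> y \<in> ?T} = UNIV"
  proof (rule sym, rule UNIV_eq_I, rule CollectI)
    fix z :: "(real^'n) \<times> (real^'n)"
    obtain a' where "(a', snd z) \<in> ?W"
      using assms unfolding total_rel_def by blast
    moreover have "z = (a', snd z) + (fst z - a', 0)"
      by simp
    ultimately show "\<exists>x y. z = x + y \<and> x \<in> ?W \<and> y \<in> ?T"
      by blast
  qed
  have int: "?W \<inter> ?T = mker R1 \<times> {0}"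
    by (auto simp: rel_ker_def mker_def)
  have "dim (UNIV :: ((real^'n) \<times> (real^'n)) set) + dim (mker R1 \<times> {0 :: real^'n}) = dim ?W + dim ?T"
    using dim_sums_Int[OF subspace_rel_ker[of R1 R2] subspace_Times[OF subspace_UNIV subspace_single_0]]
    unfolding sum int .
  then show ?thesis
    by (simp add: dim_UNIV dim_Times subspace_mker subspace_single_0 subspace_UNIV)
qed


lemma gen_real_eigenspace_invariant:
  fixes A :: "real^'n^'n"
  assumes "S \<in> gen_real_eigenspaces A" "x \<in> S"
  shows "A *v x \<in> S"
  using assms gen_eigenspace_mult_closed by (auto simp: gen_real_eigenspaces_eq)

lemma span_Union_invariant:
  fixes A :: "real^'n^'n"
  assumes "\<And>S x. S \<in> \<S> \<Longrightarrow> x \<in> S \<Longrightarrow> A *v x \<in> S" and "x \<in> span (\<Union>\<S>)"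
  shows "A *v x \<in> span (\<Union>\<S>)"
proof -
  have "(*v) A ` span (\<Union>\<S>) = span ((*v) A ` \<Union>\<S>)"
    by (rule linear_span_image[OF matrix_vector_mul_linear, symmetric])
  also have "\<dots> \<subseteq> span (\<Union>\<S>)"
    using assms(1) by (intro span_mono) blast
  finally show ?thesis
    using assms(2) by blast
qed

lemma subspace_S_Sigma: "subspace (S_Sigma A G C)"
  unfolding S_Sigma_def by (rule subspace_span)

lemma S_Sigma_subset_unobs_space: "S_Sigma A G C \<subseteq> unobs_space A C"
  unfolding S_Sigma_def by (rule span_minimal[OF _ subspace_unobs_space]) blast

lemma S_Sigma_invariant:
  fixes A :: "real^'n^'n"
  shows "x \<in> S_Sigma A G C \<Longrightarrow> A *v x \<in> S_Sigma A G C"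
  unfolding S_Sigma_def by (rule span_Union_invariant) (auto intro: gen_real_eigenspace_invariant)

text \<open>Decompose the invariant subspace \<open>\<G> \<inter> S_Sigma\<close> along the generalized eigenspaces: components
  in eigenspaces meeting \<open>\<G>\<close> trivially vanish, and the remaining eigenspaces are independent of
  those spanning \<open>S_Sigma\<close>.\<close>
lemma reach_space_inter_S_Sigma:
  fixes A :: "real^'n^'n"
  shows "reach_space A G \<inter> S_Sigma A G C = {0}"
proof -
  let ?V = "reach_space A G \<inter> S_Sigma A G C"
  let ?\<E> = "{S \<in> gen_real_eigenspaces A. S \<subseteq> unobs_space A C \<and> S \<inter> reach_space A G = {0}}"
  have "subspace ?V"
    by (rule subspace_inter[OF subspace_reach_space subspace_S_Sigma])
  moreover have "A *v x \<in> ?V" if "x \<in> ?V" for x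
    using that reach_space_invariant S_Sigma_invariant by blast
  ultimately have "?V \<subseteq> span (\<Union>S\<in>gen_real_eigenspaces A. ?V \<inter> S)"
    by (rule invariant_subspace_in_span_gen_eigenspaces)
  also have "\<dots> \<subseteq> {0}"
  proof (rule span_minimal[OF _ subspace_single_0], safe)
    fix S z assume S: "S \<in> gen_real_eigenspaces A" and z: "z \<in> reach_space A G" "z \<in> S_Sigma A G C" "z \<in> S"
    show "z = 0"
    proof (cases "S \<in> ?\<E>")
      case True
      then show ?thesis using z by blast
    next
      case False
      obtain F where "eigen_factor A F" "S = gen_eigenspace A F"
        using S by (auto simp: gen_real_eigenspaces_eq)
      then show ?thesis
        using gen_eigenspace_inter_span_others[of A F z ?\<E>] False z
        by (auto simp: S_Sigma_def)
    qed
  qed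
  finally show ?thesis
    using subspace_0[OF \<open>subspace ?V\<close>] by blast
qed

lemma invariant_subspace_subset_S_Sigma:
  fixes A :: "real^'n^'n"
  assumes split: "\<forall>S \<in> gen_real_eigenspaces A.
      (S \<subseteq> reach_space A G \<or> S \<inter> reach_space A G = {0}) \<and>
      (S \<subseteq> unobs_space A C \<or> S \<inter> unobs_space A C = {0})"
    and K: "subspace K" "\<And>x. x \<in> K \<Longrightarrow> A *v x \<in> K"
    and KQ: "K \<subseteq> unobs_space A C" and KG: "reach_space A G \<inter> K = {0}"
  shows "K \<subseteq> S_Sigma A G C"
proof -
  have "K \<subseteq> span (\<Union>S\<in>gen_real_eigenspaces A. K \<inter> S)"
    by (rule invariant_subspace_in_span_gen_eigenspaces[OF K])
  also have "\<dots> \<subseteq> S_Sigma A G C"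
  proof (rule span_minimal[OF _ subspace_S_Sigma], safe)
    fix S z assume S: "S \<in> gen_real_eigenspaces A" and z: "z \<in> K" "z \<in> S"
    show "z \<in> S_Sigma A G C"
    proof (cases "S \<subseteq> unobs_space A C \<and> S \<inter> reach_space A G = {0}")
      case True
      then show ?thesis
        using S z(2) unfolding S_Sigma_def by (blast intro: span_base)
    next
      case False
      then have "z = 0"
        using split S z KQ KG by blast
      then show ?thesis
        using subspace_0[OF subspace_S_Sigma] by simp
    qed
  qed
  finally show ?thesis .
qed


lemma admissible_if_mker_eq_S_Sigma:
  fixes A :: "real^'n^'n" and R :: "real^'n^'k"
  assumes kerR: "mker R = S_Sigma A G C"
  shows "admissible A B G C \<mu> R R"
  unfolding admissible_def
proof (intro conjI)
  show "\<forall>(x, y) \<in> rel_ker R R. (A *v x, A *v y) \<in> rel_ker R R"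
    using S_Sigma_invariant[of "_ - _" A G C]
    by (auto simp: rel_ker_same_iff kerR matrix_vector_mult_diff_distrib)
  show "rel_ker R R \<subseteq> rel_ker C C"
  proof safe
    fix x y assume "(x, y) \<in> rel_ker R R"
    then have "x - y \<in> unobs_space A C"
      using S_Sigma_subset_unobs_space by (auto simp: rel_ker_same_iff kerR)
    then show "(x, y) \<in> rel_ker C C"
      using unobs_space_subset_mker by (auto simp: rel_ker_same_iff)
  qed
  show "reach_space A G \<inter> mker R = {0}"
    using reach_space_inter_S_Sigma kerR by simp
  then show "reach_space A G \<inter> mker R = {0}" .
qed simp_all

lemma admissible_mker_subset_S_Sigma:
  fixes A :: "real^'n^'n" and R1 R2 :: "real^'n^'k"
  assumes split: "\<forall>S \<in> gen_real_eigenspaces A.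
      (S \<subseteq> reach_space A G \<or> S \<inter> reach_space A G = {0}) \<and>
      (S \<subseteq> unobs_space A C \<or> S \<inter> unobs_space A C = {0})"
    and adm: "admissible A B G C \<mu> R1 R2"
  shows "mker R1 \<subseteq> S_Sigma A G C"
proof (rule invariant_subspace_subset_S_Sigma[OF split subspace_mker])
  have mker_rel: "x \<in> mker R1 \<longleftrightarrow> (x, 0) \<in> rel_ker R1 R2" for x
    by (simp add: mker_def rel_ker_def)
  show inv: "A *v x \<in> mker R1" if "x \<in> mker R1" for x
    using adm that unfolding admissible_def mker_rel by fastforce
  show "mker R1 \<subseteq> unobs_space A C"
  proof
    fix x assume "x \<in> mker R1"
    then have "((*v) A ^^ i) x \<in> mker R1" for i
      by (induction i) (auto intro: inv)
    then have "(((*v) A ^^ i) x, 0) \<in> rel_ker C C" for i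
      using adm unfolding admissible_def mker_rel by blast
    then show "x \<in> unobs_space A C"
      by (simp add: unobs_space_iff rel_ker_def)
  qed
  show "reach_space A G \<inter> mker R1 = {0}"
    using adm unfolding admissible_def by blast
qed

theorem theorem8:
  fixes A :: "real^'n^'n" and B :: "real^'m^'n" and G :: "real^'l^'n"
    and C :: "real^'n^'p" and \<mu> :: "real^'l" and R :: "real^'n^'r"
  assumes split: "\<forall>S \<in> gen_real_eigenspaces A.
      (S \<subseteq> reach_space A G \<or> S \<inter> reach_space A G = {0}) \<and>
      (S \<subseteq> unobs_space A C \<or> S \<inter> unobs_space A C = {0})"
    and kerR: "mker R = S_Sigma A G C"
  shows "total_rel (rel_ker R R) \<and> admissible A B G C \<mu> R R \<and>
    (\<forall>(R1 :: real^'n^'k) R2. total_rel (rel_ker R1 R2) \<and> admissible A B G C \<mu> R1 R2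
        \<longrightarrow> dim (rel_ker R1 R2) \<le> dim (rel_ker R R))"
proof -
  have "dim (rel_ker R1 R2) \<le> dim (rel_ker R R)"
    if "total_rel (rel_ker R1 R2)" "admissible A B G C \<mu> R1 R2" for R1 R2 :: "real^'n^'k"
  proof -
    have "dim (rel_ker R1 R2) = CARD('n) + dim (mker R1)"
      by (rule dim_total_rel_ker[OF that(1)])
    also have "\<dots> \<le> CARD('n) + dim (mker R)"
      using dim_subset[OF admissible_mker_subset_S_Sigma[OF split that(2)]] kerR by simp
    also have "\<dots> = dim (rel_ker R R)"
      by (rule dim_total_rel_ker[OF total_rel_ker_same, symmetric])
    finally show ?thesis .
  qed
  then show ?thesis
    using total_rel_ker_same admissible_if_mker_eq_S_Sigma[OF kerR] by blast
qed

end
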